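(* Let $A$ be a unital C$^*$-algebra, $H$ a Hilbert space, and let $\Phi : A \to B(H)$ be a unital $*$-homomorphism. Then $\Phi$ is an operational extreme point of the operational convex hull $S$ of the completely positive maps of $A$ into $B(H)$. That is: whenever $\Phi = \sum_{i=1}^m {\rm Ad}\, a_i \circ \Psi_i$ with $\Psi_1,\dots,\Psi_m \in S$ and $\{a_1,\dots,a_m\}$ a finite operational partition of unity in $B(H)$, there exist $z_1,\dots,z_m \in \Phi(A)'$ such that ${\rm Ad}\, a_i \circ \Psi_i = z_i \Phi$ for every $i$.
   Context: For an operator $v$, ${\rm Ad}\, v$ denotes the map $x \mapsto v x v^*$. A finite operational partition of unity of size $m$ in a unital C$^*$-algebra $B$ is a finite set $\{a_1,\dots,a_m\}$ of non-zero elements of $B$ with $\sum_{i=1}^m a_i a_i^* = 1_B$; the set of these is denoted $FOP_m(B)$. For linear maps $\Psi_1,\dots,\Psi_m$ and $\{a_i\}\in FOP_m(B)$, the map $\sum_{i=1}^m {\rm Ad}\, a_i \circ \Psi_i$ is called an operational convex combination of the $\Psi_i$; a set of linear maps is operational convex if it is closed under all operational convex combinations, and the operational convex hull of a set is the smallest operational convex set containing it. If $S$ is an operational convex set of positive linear maps from $A$ into a unital C$^*$-subalgebra $B$ of $B(H)$, a map $\Phi \in S$ is an operational extreme point of $S$ if whenever $\Phi = \sum_{i=1}^m {\rm Ad}\, a_i \circ \Psi_i$ with $\{\Psi_i\}\subset S$ and $\{a_i\} \in FOP_m(B)$, one has ${\rm Ad}\, a_i \circ \Psi_i = z_i \Phi$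 for some $z_i \in \Phi(A)' = \{z \in B(H) : zy = yz \ \forall y \in \Phi(A)\}$, for all $i$. Here $B = B(H)$. A map $\Phi$ is completely positive if $\Phi\otimes 1_k$ is positive on $A\otimes M_k(\mathbb{C})$ for all $k$. *)

theory Defs
  imports Complex_Main
begin

class complex_vector_sp = ab_group_add +
  fixes scaleC :: "complex \<Rightarrow> 'a \<Rightarrow> 'a" (infixr "*\<^sub>C" 75)
  assumes scaleC_add_right: "c *\<^sub>C (x + y) = c *\<^sub>C x + c *\<^sub>C y"
    and scaleC_add_left: "(c + d) *\<^sub>C x = c *\<^sub>C x + d *\<^sub>C x"
    and scaleC_scaleC: "c *\<^sub>C (d *\<^sub>C x) = (c * d) *\<^sub>C x"
    and scaleC_one: "1 *\<^sub>C x = x"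

class chilbert = complex_vector_sp +
  fixes cinner :: "'a \<Rightarrow> 'a \<Rightarrow> complex"
  assumes cinner_conj_sym: "cinner x y = cnj (cinner y x)"
    and cinner_add_right: "cinner x (y + z) = cinner x y + cinner x z"
    and cinner_scaleC_right: "cinner x (c *\<^sub>C y) = c * cinner x y"
    and cinner_self_real: "Im (cinner x x) = 0"
    and cinner_self_nonneg: "0 \<le> Re (cinner x x)"
    and cinner_self_zero: "cinner x x = 0 \<Longrightarrow> x = 0"
    and hilbert_complete:
      "(\<forall>e>0. \<exists>N::nat. \<forall>m\<ge>N. \<forall>n\<ge>N. sqrt (Re (cinner (X m - X n) (X m - X n))) < e)
        \<Longrightarrow> (\<exists>L. \<forall>e>0. \<exists>N::nat. \<forall>n\<ge>N. sqrt (Re (cinner (X n - L) (X n - L))) < e)"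

definition hnorm :: "'h::chilbert \<Rightarrow> real" where
  "hnorm x = sqrt (Re (cinner x x))"

class cstar_algebra = ring_1 + complex_vector_sp +
  fixes cstar :: "'a \<Rightarrow> 'a"
    and cnorm :: "'a \<Rightarrow> real"
  assumes scaleC_mult_left: "(c *\<^sub>C x) * y = c *\<^sub>C (x * y)"
    and scaleC_mult_right: "x * (c *\<^sub>C y) = c *\<^sub>C (x * y)"
    and cstar_cstar: "cstar (cstar x) = x"
    and cstar_add: "cstar (x + y) = cstar x + cstar y"
    and cstar_mult: "cstar (x * y) = cstar y * cstar x"
    and cstar_scaleC: "cstar (c *\<^sub>C x) = cnj c *\<^sub>C cstar x"
    and norm_triangle: "cnorm (x + y) \<le> cnorm x + cnorm y"
    and norm_scaleC: "cnorm (c *\<^sub>C x) = cmod c * cnorm x"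
    and norm_zero_iff: "cnorm x = 0 \<longleftrightarrow> x = 0"
    and norm_submult: "cnorm (x * y) \<le> cnorm x * cnorm y"
    and cstar_identity: "cnorm (cstar x * x) = cnorm x ^ 2"
    and banach_complete:
      "(\<forall>e>0. \<exists>N::nat. \<forall>m\<ge>N. \<forall>n\<ge>N. cnorm (X m - X n) < e)
        \<Longrightarrow> (\<exists>L. \<forall>e>0. \<exists>N::nat. \<forall>n\<ge>N. cnorm (X n - L) < e)"

text \<open>Operators on H are functions; B(H) is the set of bounded complex-linear ones,
with product = composition, unit = id.\<close>
definition BH :: "('h::chilbert \<Rightarrow> 'h) set" where
  "BH = {T. (\<forall>x y. T (x + y) = T x + T y) \<and> (\<forall>c x. T (c *\<^sub>C x) = c *\<^sub>C T x)
            \<and> (\<exists>K. \<forall>x. hnorm (T x) \<le> K * hnorm x)}"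

definition adj :: "('h::chilbert \<Rightarrow> 'h) \<Rightarrow> ('h \<Rightarrow> 'h)" where
  "adj T = (SOME S. S \<in> BH \<and> (\<forall>x y. cinner (T x) y = cinner x (S y)))"

definition Ad :: "('h::chilbert \<Rightarrow> 'h) \<Rightarrow> ('h \<Rightarrow> 'h) \<Rightarrow> ('h \<Rightarrow> 'h)" where
  "Ad v x = v \<circ> x \<circ> adj v"

text \<open>Finite operational partition of unity of size m in B(H), indexed as a_0..a_(m-1):
distinct (it is a set of m elements), non-zero elements with sum a_i a_i^* = 1.\<close>
definition FOP :: "nat \<Rightarrow> (nat \<Rightarrow> ('h::chilbert \<Rightarrow> 'h)) set" where
  "FOP m = {a. inj_on a {..<m} \<and> (\<forall>i<m. a i \<in> BH \<and> a i \<noteq> (\<lambda>_. 0))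
               \<and> (\<lambda>h. \<Sum>i<m. (a i \<circ> adj (a i)) h) = id}"

text \<open>k x k matrices over A (entries indexed by i,j < k); positivity in the C*-algebra
M_k(A) means X = Y^* Y.\<close>
definition pos_matA :: "nat \<Rightarrow> (nat \<Rightarrow> nat \<Rightarrow> 'a::cstar_algebra) \<Rightarrow> bool" where
  "pos_matA k X \<longleftrightarrow> (\<exists>Y. \<forall>i<k. \<forall>j<k. X i j = (\<Sum>l<k. cstar (Y l i) * Y l j))"

text \<open>Positivity in M_k(B(H)) = B(H^k): the operator is positive on H^k.\<close>
definition pos_matB :: "nat \<Rightarrow> (nat \<Rightarrow> nat \<Rightarrow> ('h::chilbert \<Rightarrow> 'h)) \<Rightarrow> bool" where
  "pos_matB k T \<longleftrightarrow> (\<forall>\<xi>::nat \<Rightarrow> 'h.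
      Im (\<Sum>i<k. \<Sum>j<k. cinner (\<xi> i) (T i j (\<xi> j))) = 0 \<and>
      0 \<le> Re (\<Sum>i<k. \<Sum>j<k. cinner (\<xi> i) (T i j (\<xi> j))))"

definition linear_map_BH :: "('a::cstar_algebra \<Rightarrow> ('h::chilbert \<Rightarrow> 'h)) \<Rightarrow> bool" where
  "linear_map_BH \<Psi> \<longleftrightarrow> (\<forall>x. \<Psi> x \<in> BH)
     \<and> (\<forall>x y. \<Psi> (x + y) = (\<lambda>h. \<Psi> x h + \<Psi> y h))
     \<and> (\<forall>c x. \<Psi> (c *\<^sub>C x) = (\<lambda>h. c *\<^sub>C \<Psi> x h))"

definition completely_positive :: "('a::cstar_algebra \<Rightarrow> ('h::chilbert \<Rightarrow> 'h)) \<Rightarrow> bool" where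
  "completely_positive \<Psi> \<longleftrightarrow> linear_map_BH \<Psi> \<and>
     (\<forall>k X. pos_matA k X \<longrightarrow> pos_matB k (\<lambda>i j. \<Psi> (X i j)))"

definition CP_maps :: "('a::cstar_algebra \<Rightarrow> ('h::chilbert \<Rightarrow> 'h)) set" where
  "CP_maps = {\<Psi>. completely_positive \<Psi>}"

definition op_comb :: "nat \<Rightarrow> (nat \<Rightarrow> ('h::chilbert \<Rightarrow> 'h)) \<Rightarrow> (nat \<Rightarrow> ('a \<Rightarrow> ('h \<Rightarrow> 'h)))
                        \<Rightarrow> ('a \<Rightarrow> ('h \<Rightarrow> 'h))" where
  "op_comb m a \<Psi> = (\<lambda>x h. \<Sum>i<m. Ad (a i) (\<Psi> i x) h)"

definition op_convex :: "('a \<Rightarrow> ('h::chilbert \<Rightarrow> 'h)) set \<Rightarrow> bool" where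
  "op_convex S \<longleftrightarrow> (\<forall>m a \<Psi>. a \<in> FOP m \<and> (\<forall>i<m. \<Psi> i \<in> S) \<longrightarrow> op_comb m a \<Psi> \<in> S)"

definition op_convex_hull :: "('a \<Rightarrow> ('h::chilbert \<Rightarrow> 'h)) set \<Rightarrow> ('a \<Rightarrow> ('h \<Rightarrow> 'h)) set" where
  "op_convex_hull S = \<Inter>{T. S \<subseteq> T \<and> op_convex T}"

definition commutant_range :: "('a \<Rightarrow> ('h::chilbert \<Rightarrow> 'h)) \<Rightarrow> ('h \<Rightarrow> 'h) set" where
  "commutant_range \<Phi> = {z \<in> BH. \<forall>x. z \<circ> \<Phi> x = \<Phi> x \<circ> z}"

definition op_extreme :: "('a \<Rightarrow> ('h::chilbert \<Rightarrow> 'h)) set \<Rightarrow> ('a \<Rightarrow> ('h \<Rightarrow> 'h)) \<Rightarrow> bool" where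
  "op_extreme S \<Phi> \<longleftrightarrow> \<Phi> \<in> S \<and>
     (\<forall>m a \<Psi>. a \<in> FOP m \<and> (\<forall>i<m. \<Psi> i \<in> S) \<and> \<Phi> = op_comb m a \<Psi> \<longrightarrow>
        (\<exists>z. \<forall>i<m. z i \<in> commutant_range \<Phi> \<and>
               (\<lambda>x. Ad (a i) (\<Psi> i x)) = (\<lambda>x. z i \<circ> \<Phi> x)))"

definition unital_star_hom :: "('a::cstar_algebra \<Rightarrow> ('h::chilbert \<Rightarrow> 'h)) \<Rightarrow> bool" where
  "unital_star_hom \<Phi> \<longleftrightarrow> linear_map_BH \<Phi>
     \<and> (\<forall>x y. \<Phi> (x * y) = \<Phi> x \<circ> \<Phi> y)
     \<and> (\<forall>x. \<Phi> (cstar x) = adj (\<Phi> x))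
     \<and> \<Phi> 1 = id"

end

theory Submission
  imports Defs
begin

text \<open>For \<open>x \<in> A\<close> the matrix \<open>[[x\<^sup>*x, x\<^sup>*], [x, 1]] = [x 1]\<^sup>*[x 1]\<close> is positive in \<open>M\<^sub>2(A)\<close>, so every
  completely positive \<open>\<Theta>\<close> defines a positive form \<open>q\<^sub>\<Theta>(\<xi>, \<zeta>)\<close> on \<open>H \<oplus> H\<close>, additive in \<open>\<Theta>\<close>; for the
  *-homomorphism \<open>\<Phi>\<close> it vanishes at \<open>(\<xi>, -\<Phi>(x)\<xi>)\<close>. Completely positive maps are closed under
  operational convex combinations, so a decomposition \<open>\<Phi> = \<Sum> Ad a\<^sub>i \<circ> \<Psi>\<^sub>i\<close> inside the hull writes
  \<open>\<Phi>\<close> as a sum of completely positive \<open>\<Theta>\<^sub>i = Ad a\<^sub>i \<circ> \<Psi>\<^sub>i\<close>, and each \<open>q\<^sub>\<Theta>\<^sub>i\<close> vanishes at that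
  point as well. A zero of a positive form lies in its kernel, which reads
  \<open>\<Theta>\<^sub>i(x) = \<Theta>\<^sub>i(1)\<Phi>(x)\<close> and \<open>\<Theta>\<^sub>i(x\<^sup>*) = \<Phi>(x\<^sup>*)\<Theta>\<^sub>i(1)\<close>; so \<open>z\<^sub>i = \<Theta>\<^sub>i(1)\<close> commutes with \<open>\<Phi>(A)\<close>.
  Adjoints, which are defined by choice, exist by the Riesz representation theorem.\<close>

lemma scaleC_zero_left [simp]: "(0::complex) *\<^sub>C (x::'a::complex_vector_sp) = 0"
proof -
  have "0 *\<^sub>C x = 0 *\<^sub>C x + 0 *\<^sub>C x"
    by (metis add_0 scaleC_add_left)
  then show ?thesis
    by simp
qed

lemma scaleC_zero_right [simp]: "c *\<^sub>C (0::'a::complex_vector_sp) = 0"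
proof -
  have "c *\<^sub>C (0::'a) = c *\<^sub>C 0 + c *\<^sub>C 0"
    by (metis add_0 scaleC_add_right)
  then show ?thesis
    by simp
qed

lemma scaleC_minus_left: "(- c) *\<^sub>C (x::'a::complex_vector_sp) = - (c *\<^sub>C x)"
proof -
  have "(- c) *\<^sub>C x + c *\<^sub>C x = 0"
    by (simp flip: scaleC_add_left)
  then show ?thesis
    by (simp add: eq_neg_iff_add_eq_0)
qed

lemma scaleC_minus_one: "(- 1) *\<^sub>C (x::'a::complex_vector_sp) = - x"
  by (simp add: scaleC_minus_left scaleC_one)

lemma scaleC_sum_right: "c *\<^sub>C (\<Sum>i\<in>I. f i) = (\<Sum>i\<in>I. c *\<^sub>C (f i::'a::complex_vector_sp))"
  by (induction I rule: infinite_finite_induct) (auto simp: scaleC_add_right)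

lemma cinner_add_left: "cinner (x + y) (z::'a::chilbert) = cinner x z + cinner y z"
  by (metis cinner_conj_sym cinner_add_right complex_cnj_add)

lemma cinner_scaleC_left: "cinner (c *\<^sub>C x) (y::'a::chilbert) = cnj c * cinner x y"
  by (metis cinner_conj_sym cinner_scaleC_right complex_cnj_mult)

lemma cinner_zero_right [simp]: "cinner x (0::'a::chilbert) = 0"
  by (metis add_0 add_cancel_right_right cinner_add_right)

lemma cinner_zero_left [simp]: "cinner (0::'a::chilbert) x = 0"
  by (metis cinner_conj_sym cinner_zero_right complex_cnj_zero)

lemma cinner_minus_right: "cinner x (- (y::'a::chilbert)) = - cinner x y"
  by (metis add.right_inverse cinner_add_right cinner_zero_right eq_neg_iff_add_eq_0)

lemma cinner_minus_left: "cinner (- x) (y::'a::chilbert) = - cinner x y"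
  by (metis cinner_conj_sym cinner_minus_right complex_cnj_minus)

lemma cinner_diff_right: "cinner x ((y::'a::chilbert) - z) = cinner x y - cinner x z"
  by (simp only: diff_conv_add_uminus cinner_add_right cinner_minus_right)

lemma cinner_sum_right: "cinner x (\<Sum>i\<in>I. f i) = (\<Sum>i\<in>I. cinner (x::'a::chilbert) (f i))"
  by (induction I rule: infinite_finite_induct) (auto simp: cinner_add_right)

lemma cinner_sum_left: "cinner (\<Sum>i\<in>I. f i) x = (\<Sum>i\<in>I. cinner (f i) (x::'a::chilbert))"
  by (induction I rule: infinite_finite_induct) (auto simp: cinner_add_left)

lemma cinner_self_eq_Re: "cinner x (x::'a::chilbert) = complex_of_real (Re (cinner x x))"
  using cinner_self_real[of x] by (simp add: complex_eq_iff)

lemma cinner_eqI_right: "(\<And>z. cinner z x = cinner z (y::'a::chilbert)) \<Longrightarrow> x = y"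
proof -
  assume "\<And>z. cinner z x = cinner z y"
  then have "cinner (x - y) (x - y) = 0"
    by (simp add: cinner_diff_right)
  then show ?thesis
    using cinner_self_zero by fastforce
qed

lemma cinner_eqI_left: "(\<And>z. cinner x z = cinner (y::'a::chilbert) z) \<Longrightarrow> x = y"
  by (metis cinner_conj_sym cinner_eqI_right)

definition hnorm_sq :: "'a::chilbert \<Rightarrow> real" where
  "hnorm_sq x = Re (cinner x x)"

lemma hnorm_sq_nonneg: "0 \<le> hnorm_sq x"
  by (simp add: hnorm_sq_def cinner_self_nonneg)

lemma hnorm_nonneg: "0 \<le> hnorm x"
  by (simp add: hnorm_def cinner_self_nonneg)

lemma power2_hnorm: "hnorm x ^ 2 = hnorm_sq x"
  by (simp add: hnorm_def hnorm_sq_def cinner_self_nonneg)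

lemma hnorm_eq_sqrt: "hnorm x = sqrt (hnorm_sq x)"
  by (simp add: hnorm_def hnorm_sq_def)

lemma hnorm_sq_add_scaleC:
  "hnorm_sq (x + c *\<^sub>C y) = hnorm_sq x + 2 * Re (c * cinner x y) + (cmod c)\<^sup>2 * hnorm_sq (y::'a::chilbert)"
proof -
  have "cinner (x + c *\<^sub>C y) (x + c *\<^sub>C y)
      = cinner x x + c * cinner x y + cnj (c * cinner x y) + cnj c * c * cinner y y"
    by (simp add: cinner_add_left cinner_add_right cinner_scaleC_left cinner_scaleC_right
        algebra_simps flip: cinner_conj_sym)
  moreover have "cnj c * c = complex_of_real ((cmod c)\<^sup>2)"
    using complex_norm_square[of c] by (simp add: mult.commute)
  ultimately show ?thesis
    by (simp add: hnorm_sq_def)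
qed

lemma Re_scaled_conj_mult: "Re (complex_of_real s * cnj b * b) = s * (cmod b)\<^sup>2"
proof -
  have "complex_of_real s * cnj b * b = complex_of_real (s * (cmod b)\<^sup>2)"
    using complex_norm_square[of b] by (simp add: mult.assoc mult.commute)
  then show ?thesis
    by (simp only: Re_complex_of_real)
qed

lemma quadratic_nonneg_discriminant:
  fixes a B c :: real
  assumes "\<And>s. 0 \<le> a - 2 * s * B + s\<^sup>2 * B * c" and "0 \<le> B" and "0 \<le> c"
  shows "B \<le> a * c"
proof (cases "c = 0")
  case True
  show ?thesis
  proof (rule ccontr)
    assume "\<not> B \<le> a * c"
    then have "B > 0"
      using True by simp
    have "0 \<le> a"
      using assms(1)[of 0] by simp
    have "0 \<le> a - 2 * ((a + 1) / (2 * B)) * B"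
      using assms(1)[of "(a + 1) / (2 * B)"] True by simp
    then show False
      using \<open>B > 0\<close> by simp
  qed
next
  case False
  then have "c > 0"
    using assms(3) by simp
  have "0 \<le> a - 2 * (1 / c) * B + (1 / c)\<^sup>2 * B * c"
    by (rule assms(1))
  also have "\<dots> = a - B / c"
    using \<open>c > 0\<close> by (simp add: power2_eq_square field_simps)
  finally show ?thesis
    using \<open>c > 0\<close> by (simp add: field_simps)
qed

lemma real_quadratic_nonneg_imp_linear_zero:
  fixes a b :: real
  assumes "\<And>s. 0 \<le> s * a + s\<^sup>2 * b"
  shows "a = 0"
proof (rule ccontr)
  assume "a \<noteq> 0"
  define c where "c = \<bar>b\<bar> + 1"
  have "c > 0" "b \<le> c"
    by (auto simp: c_def)
  define s where "s = - a / (2 * c)"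
  have "s\<^sup>2 * b \<le> s\<^sup>2 * c"
    using \<open>b \<le> c\<close> by (intro mult_left_mono) auto
  also have "s\<^sup>2 * c = - (s * a) / 2"
    using \<open>c > 0\<close> by (simp add: s_def field_simps power2_eq_square)
  finally have "s * a + s\<^sup>2 * b \<le> (s * a) / 2"
    by linarith
  moreover have "s * a < 0"
    using \<open>a \<noteq> 0\<close> \<open>c > 0\<close> by (simp add: s_def field_simps flip: power2_eq_square)
  ultimately show False
    using assms[of s] by linarith
qed

lemma complex_quadratic_nonneg_imp_linear_zero:
  fixes \<alpha> \<beta> \<gamma> :: complex
  assumes "\<And>t. Im (t * \<alpha> + cnj t * \<beta> + cnj t * t * \<gamma>) = 0 \<and> 0 \<le> Re (t * \<alpha> + cnj t * \<beta> + cnj t * t * \<gamma>)"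
  shows "\<alpha> = 0" and "\<beta> = 0"
proof -
  have Re: "0 \<le> s * Re (\<alpha> + \<beta>) + s\<^sup>2 * Re \<gamma>"
    and Im: "0 \<le> s * Im (\<alpha> + \<beta>) + s\<^sup>2 * Im \<gamma>"
    and iRe: "0 \<le> s * - Im (\<alpha> - \<beta>) + s\<^sup>2 * Re \<gamma>"
    and iIm: "0 \<le> s * Re (\<alpha> - \<beta>) + s\<^sup>2 * Im \<gamma>" for s
    using assms[of "complex_of_real s"] assms[of "\<i> * complex_of_real s"]
    by (simp_all add: power2_eq_square algebra_simps)
  have "Re (\<alpha> + \<beta>) = 0" "Im (\<alpha> + \<beta>) = 0" "Im (\<alpha> - \<beta>) = 0" "Re (\<alpha> - \<beta>) = 0"
    using real_quadratic_nonneg_imp_linear_zero[OF Re] real_quadratic_nonneg_imp_linear_zero[OF Im]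
      real_quadratic_nonneg_imp_linear_zero[OF iRe] real_quadratic_nonneg_imp_linear_zero[OF iIm]
    by simp_all
  then show "\<alpha> = 0" and "\<beta> = 0"
    by (simp_all add: complex_eq_iff)
qed

lemma cinner_eq_0_if_hnorm_sq_minimal:
  assumes "\<And>t. hnorm_sq L \<le> hnorm_sq (L + t *\<^sub>C (k::'a::chilbert))"
  shows "cinner L k = 0"
proof -
  let ?b = "cinner L k"
  have "0 \<le> s * (- 2 * (cmod ?b)\<^sup>2) + s\<^sup>2 * ((cmod ?b)\<^sup>2 * hnorm_sq k)" for s
    using assms[of "- (complex_of_real s * cnj ?b)"] Re_scaled_conj_mult[of s ?b]
    by (simp add: hnorm_sq_add_scaleC norm_mult power_mult_distrib algebra_simps)
  then have "- 2 * (cmod ?b)\<^sup>2 = 0"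
    by (rule real_quadratic_nonneg_imp_linear_zero)
  then show ?thesis
    by simp
qed

lemma cauchy_schwarz: "(cmod (cinner x y))\<^sup>2 \<le> hnorm_sq x * hnorm_sq (y::'a::chilbert)"
proof -
  let ?b = "cinner x y"
  have "0 \<le> hnorm_sq x - 2 * s * (cmod ?b)\<^sup>2 + s\<^sup>2 * (cmod ?b)\<^sup>2 * hnorm_sq y" for s
  proof -
    let ?t = "- (complex_of_real s * cnj ?b)"
    have "0 \<le> hnorm_sq (x + ?t *\<^sub>C y)"
      by (rule hnorm_sq_nonneg)
    also have "\<dots> = hnorm_sq x - 2 * s * (cmod ?b)\<^sup>2 + s\<^sup>2 * (cmod ?b)\<^sup>2 * hnorm_sq y"
      using Re_scaled_conj_mult[of s ?b]
      by (simp add: hnorm_sq_add_scaleC norm_mult power_mult_distrib)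
    finally show ?thesis .
  qed
  from quadratic_nonneg_discriminant[OF this _ hnorm_sq_nonneg] show ?thesis
    by (simp add: mult.commute)
qed

lemma cinner_norm_bound: "cmod (cinner x y) \<le> hnorm x * hnorm (y::'a::chilbert)"
proof -
  have "(cmod (cinner x y))\<^sup>2 \<le> (hnorm x * hnorm y)\<^sup>2"
    using cauchy_schwarz[of x y] by (simp add: power_mult_distrib power2_hnorm)
  then show ?thesis
    by (meson hnorm_nonneg mult_nonneg_nonneg power2_le_imp_le)
qed

lemma hnorm_triangle: "hnorm (x + y) \<le> hnorm x + hnorm (y::'a::chilbert)"
proof -
  have "hnorm_sq (x + y) = hnorm_sq x + 2 * Re (cinner x y) + hnorm_sq y"
    using hnorm_sq_add_scaleC[of x 1 y] by (simp add: scaleC_one)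
  also have "Re (cinner x y) \<le> hnorm x * hnorm y"
    using cinner_norm_bound[of x y] complex_Re_le_cmod order_trans by blast
  finally have "(hnorm (x + y))\<^sup>2 \<le> (hnorm x + hnorm y)\<^sup>2"
    by (simp add: power2_hnorm power2_sum)
  then show ?thesis
    by (meson add_nonneg_nonneg hnorm_nonneg power2_le_imp_le)
qed

lemma hnorm_scaleC: "hnorm (c *\<^sub>C x) = cmod c * hnorm (x::'a::chilbert)"
proof -
  have "hnorm_sq (c *\<^sub>C x) = (cmod c)\<^sup>2 * hnorm_sq x"
    using hnorm_sq_add_scaleC[of 0 c x] by (simp add: hnorm_sq_def)
  then show ?thesis
    by (simp add: hnorm_eq_sqrt real_sqrt_mult)
qed

lemma hnorm_minus_commute: "hnorm (x - y) = hnorm (y - (x::'a::chilbert))"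
  using hnorm_scaleC[of "- 1" "y - x"] by (simp add: scaleC_minus_one)

lemma hnorm_diff_bound: "\<bar>hnorm x - hnorm y\<bar> \<le> hnorm (x - (y::'a::chilbert))"
  using hnorm_triangle[of "x - y" y] hnorm_triangle[of "y - x" x] hnorm_minus_commute[of x y]
  by simp

lemma parallelogram_law:
  "hnorm_sq (x - y) = 2 * hnorm_sq x + 2 * hnorm_sq y - hnorm_sq (x + (y::'a::chilbert))"
  using hnorm_sq_add_scaleC[of x 1 y] hnorm_sq_add_scaleC[of x "- 1" y]
  by (simp add: scaleC_one scaleC_minus_one)

lemma BH_add: "T \<in> BH \<Longrightarrow> T (x + y) = T x + T y"
  by (simp add: BH_def)

lemma BH_scaleC: "T \<in> BH \<Longrightarrow> T (c *\<^sub>C x) = c *\<^sub>C T x"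
  by (simp add: BH_def)

lemma BH_minus: "T \<in> BH \<Longrightarrow> T (- x) = - T x"
  by (metis BH_scaleC scaleC_minus_one)

lemma BH_bound: "T \<in> BH \<Longrightarrow> \<exists>K\<ge>0. \<forall>x. hnorm (T x) \<le> K * hnorm x"
proof -
  assume "T \<in> BH"
  then obtain K where K: "\<forall>x. hnorm (T x) \<le> K * hnorm x"
    by (auto simp: BH_def)
  have "hnorm (T x) \<le> max K 0 * hnorm x" for x
    using K[rule_format, of x] hnorm_nonneg[of x]
    by (meson max.cobounded1 mult_right_mono order_trans)
  then show ?thesis
    by (metis max.cobounded2)
qed

lemma BH_comp: "S \<in> BH \<Longrightarrow> T \<in> BH \<Longrightarrow> S \<circ> T \<in> BH"
proof -
  assume S: "S \<in> BH" and T: "T \<in> BH"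
  obtain K where K: "K \<ge> 0" "\<forall>x. hnorm (S x) \<le> K * hnorm x"
    using BH_bound[OF S] by blast
  obtain L where L: "\<forall>x. hnorm (T x) \<le> L * hnorm x"
    using BH_bound[OF T] by blast
  have "hnorm (S (T x)) \<le> (K * L) * hnorm x" for x
    using K order_trans mult_left_mono[OF L[rule_format] K(1)] by (fastforce simp: mult.assoc)
  then show ?thesis
    using S T unfolding BH_def by auto
qed

lemma BH_zero_fun: "(\<lambda>_. 0) \<in> BH"
  unfolding BH_def by (auto simp: hnorm_def intro: exI[of _ 0])

lemma BH_add_fun: "S \<in> BH \<Longrightarrow> T \<in> BH \<Longrightarrow> (\<lambda>h. S h + T h) \<in> BH"
proof -
  assume S: "S \<in> BH" and T: "T \<in> BH"
  obtain K where K: "\<forall>x. hnorm (S x) \<le> K * hnorm x"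
    using BH_bound[OF S] by blast
  obtain L where L: "\<forall>x. hnorm (T x) \<le> L * hnorm x"
    using BH_bound[OF T] by blast
  have "hnorm (S x + T x) \<le> (K + L) * hnorm x" for x
    using hnorm_triangle[of "S x" "T x"] K L by (smt (verit, best) distrib_right)
  then have "\<exists>K. \<forall>x. hnorm (S x + T x) \<le> K * hnorm x"
    by blast
  then show ?thesis
    using S T unfolding BH_def by (auto simp: algebra_simps scaleC_add_right)
qed

lemma BH_sum_fun: "(\<And>i. i \<in> I \<Longrightarrow> T i \<in> BH) \<Longrightarrow> (\<lambda>h. \<Sum>i\<in>I. T i h) \<in> BH"
  by (induction I rule: infinite_finite_induct) (simp_all add: BH_zero_fun BH_add_fun)

section \<open>The Riesz representation theorem and adjoints\<close>

lemma Cauchy_hnorm_converges: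
  fixes u :: "nat \<Rightarrow> 'a::chilbert"
  assumes "\<And>m n. hnorm (u m - u n) \<le> b m + b n" and "b \<longlonglongrightarrow> 0"
  obtains L where "(\<lambda>n. hnorm (u n - L)) \<longlonglongrightarrow> 0"
proof -
  have "\<exists>N. \<forall>m\<ge>N. \<forall>n\<ge>N. hnorm (u m - u n) < e" if "e > 0" for e
  proof -
    obtain N where "\<forall>n\<ge>N. \<bar>b n\<bar> < e / 2"
      using LIMSEQ_D[OF assms(2), of "e / 2"] \<open>e > 0\<close> by auto
    then have "hnorm (u m - u n) < e" if "m \<ge> N" "n \<ge> N" for m n
    proof -
      have "\<bar>b m\<bar> < e / 2" "\<bar>b n\<bar> < e / 2"
        using \<open>\<forall>n\<ge>N. \<bar>b n\<bar> < e / 2\<close> that by auto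
      then show ?thesis
        using assms(1)[of m n] by arith
    qed
    then show ?thesis
      by blast
  qed
  then obtain L where L: "\<forall>e>0. \<exists>N. \<forall>n\<ge>N. hnorm (u n - L) < e"
    using hilbert_complete[of u] unfolding hnorm_def by blast
  have "(\<lambda>n. hnorm (u n - L)) \<longlonglongrightarrow> 0"
    using L by (intro LIMSEQ_I) (simp add: hnorm_nonneg)
  then show thesis
    by (rule that)
qed

lemma bounded_additive_tendsto:
  fixes g :: "'a::chilbert \<Rightarrow> complex"
  assumes add: "\<And>x y. g (x + y) = g x + g y" and bnd: "\<And>x. cmod (g x) \<le> C * hnorm x"
    and lim: "(\<lambda>n. hnorm (u n - L)) \<longlonglongrightarrow> 0"
  shows "(\<lambda>n. g (u n)) \<longlonglongrightarrow> g L"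
proof -
  have diff: "g (u n) - g L = g (u n - L)" for n
    using add[of "u n - L" L] by simp
  have "(\<lambda>n. cmod (g (u n) - g L)) \<longlonglongrightarrow> 0"
  proof (rule real_tendsto_sandwich[where f = "\<lambda>_. 0" and h = "\<lambda>n. C * hnorm (u n - L)"])
    show "\<forall>\<^sub>F n in sequentially. cmod (g (u n) - g L) \<le> C * hnorm (u n - L)"
      by (simp add: diff bnd)
    show "(\<lambda>n. C * hnorm (u n - L)) \<longlonglongrightarrow> 0"
      using tendsto_mult_right_zero[OF lim] .
  qed auto
  then show ?thesis
    by (simp add: tendsto_norm_zero_iff LIM_zero_iff)
qed

lemma hnorm_tendsto:
  fixes u :: "nat \<Rightarrow> 'a::chilbert"
  assumes "(\<lambda>n. hnorm (u n - L)) \<longlonglongrightarrow> 0"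
  shows "(\<lambda>n. hnorm (u n)) \<longlonglongrightarrow> hnorm L"
proof -
  have "(\<lambda>n. \<bar>hnorm (u n) - hnorm L\<bar>) \<longlonglongrightarrow> 0"
    by (rule real_tendsto_sandwich[where f = "\<lambda>_. 0" and h = "\<lambda>n. hnorm (u n - L)"])
      (simp_all add: hnorm_diff_bound assms)
  then show ?thesis
    using tendsto_rabs_zero_iff LIM_zero_iff by blast
qed

lemma hnorm_sq_diff_le_midpoint:
  fixes x y :: "'a::chilbert"
  assumes "d \<le> hnorm_sq ((1 / 2) *\<^sub>C (x + y))" and "hnorm_sq x \<le> d + e" and "hnorm_sq y \<le> d + e'"
  shows "hnorm_sq (x - y) \<le> 2 * e + 2 * e'"
proof -
  have "4 * hnorm_sq ((1 / 2) *\<^sub>C (x + y)) = hnorm_sq (x + y)"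
    using hnorm_sq_add_scaleC[of 0 "1 / 2" "x + y"] by (simp add: hnorm_sq_def power2_eq_square)
  then show ?thesis
    using parallelogram_law[of x y] assms by linarith
qed

lemma minimizing_sequence_converges:
  fixes u :: "nat \<Rightarrow> 'a::chilbert"
  assumes mid: "\<And>m n. d \<le> hnorm_sq ((1 / 2) *\<^sub>C (u m + u n))"
    and lower: "\<And>n. d \<le> hnorm_sq (u n)" and upper: "\<And>n. hnorm_sq (u n) \<le> d + \<epsilon> n"
    and "\<epsilon> \<longlonglongrightarrow> 0" and "\<And>n. 0 \<le> \<epsilon> n"
  obtains L where "(\<lambda>n. hnorm (u n - L)) \<longlonglongrightarrow> 0" and "hnorm_sq L = d"
proof -
  have "hnorm (u m - u n) \<le> sqrt (2 * \<epsilon> m) + sqrt (2 * \<epsilon> n)" for m n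
  proof -
    have "hnorm (u m - u n) \<le> sqrt (2 * \<epsilon> m + 2 * \<epsilon> n)"
      unfolding hnorm_eq_sqrt
      by (rule real_sqrt_le_mono[OF hnorm_sq_diff_le_midpoint[OF mid upper upper]])
    also have "\<dots> \<le> sqrt (2 * \<epsilon> m) + sqrt (2 * \<epsilon> n)"
      by (rule sqrt_add_le_add_sqrt) (simp_all add: \<open>\<And>n. 0 \<le> \<epsilon> n\<close>)
    finally show ?thesis .
  qed
  moreover have "(\<lambda>n. sqrt (2 * \<epsilon> n)) \<longlonglongrightarrow> 0"
    using tendsto_real_sqrt[OF tendsto_mult_right_zero[OF \<open>\<epsilon> \<longlonglongrightarrow> 0\<close>]] by simp
  ultimately obtain L where lim: "(\<lambda>n. hnorm (u n - L)) \<longlonglongrightarrow> 0"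
    by (rule Cauchy_hnorm_converges)
  have "(\<lambda>n. (hnorm (u n))\<^sup>2) \<longlonglongrightarrow> (hnorm L)\<^sup>2"
    by (intro tendsto_power hnorm_tendsto lim)
  then have "(\<lambda>n. hnorm_sq (u n)) \<longlonglongrightarrow> hnorm_sq L"
    by (simp add: power2_hnorm)
  moreover have "(\<lambda>n. hnorm_sq (u n)) \<longlonglongrightarrow> d"
  proof (rule real_tendsto_sandwich[where f = "\<lambda>_. d" and h = "\<lambda>n. d + \<epsilon> n"])
    show "(\<lambda>n. d + \<epsilon> n) \<longlonglongrightarrow> d"
      using tendsto_add[OF tendsto_const \<open>\<epsilon> \<longlonglongrightarrow> 0\<close>] by simp
  qed (simp_all add: lower upper)
  ultimately have "hnorm_sq L = d"
    by (rule LIMSEQ_unique)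
  with lim show thesis
    by (rule that)
qed

lemma min_norm_solution:
  fixes g :: "'a::chilbert \<Rightarrow> complex"
  assumes add: "\<And>x y. g (x + y) = g x + g y" and scal: "\<And>c x. g (c *\<^sub>C x) = c * g x"
    and bnd: "\<And>x. cmod (g x) \<le> C * hnorm x" and "g u0 = 1"
  obtains L where "g L = 1" and "\<And>u. g u = 1 \<Longrightarrow> hnorm_sq L \<le> hnorm_sq u"
proof -
  define M where "M = hnorm_sq ` {u. g u = 1}"
  define d where "d = Inf M"
  have "M \<noteq> {}" and "bdd_below M"
    using \<open>g u0 = 1\<close> hnorm_sq_nonneg unfolding M_def by (auto intro!: bdd_belowI[of _ 0])
  then have d_le: "d \<le> hnorm_sq u" if "g u = 1" for u
    using that unfolding d_def M_def by (simp add: cInf_lower)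
  define \<epsilon> where "\<epsilon> n = inverse (real (Suc n))" for n
  have "\<exists>u. g u = 1 \<and> hnorm_sq u < d + \<epsilon> n" for n
    using cInf_lessD[OF \<open>M \<noteq> {}\<close>, of "d + \<epsilon> n"] unfolding d_def M_def \<epsilon>_def by auto
  then obtain u where u1: "\<And>n. g (u n) = 1" and u_lt: "\<And>n. hnorm_sq (u n) < d + \<epsilon> n"
    by metis
  obtain L where lim: "(\<lambda>n. hnorm (u n - L)) \<longlonglongrightarrow> 0" and "hnorm_sq L = d"
  proof (rule minimizing_sequence_converges[of d u \<epsilon>])
    show "d \<le> hnorm_sq ((1 / 2) *\<^sub>C (u m + u n))" for m n
      by (rule d_le) (simp add: scal add u1)
    show "d \<le> hnorm_sq (u n)" "hnorm_sq (u n) \<le> d + \<epsilon> n" "0 \<le> \<epsilon> n" for n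
      using d_le[OF u1] u_lt[of n] by (simp_all add: \<epsilon>_def)
    show "\<epsilon> \<longlonglongrightarrow> 0"
      unfolding \<epsilon>_def by (rule LIMSEQ_inverse_real_of_nat)
  qed
  have "(\<lambda>n. g (u n)) \<longlonglongrightarrow> g L"
    by (rule bounded_additive_tendsto[OF add bnd lim])
  then have "g L = 1"
    by (simp add: u1 LIMSEQ_const_iff)
  then show thesis
    using that \<open>hnorm_sq L = d\<close> d_le by simp
qed

text \<open>A minimal-norm solution of \<open>g u = 1\<close> is orthogonal to the kernel of \<open>g\<close>; rescaling it
  represents \<open>g\<close>.\<close>

lemma riesz_representation:
  fixes g :: "'a::chilbert \<Rightarrow> complex"
  assumes add: "\<And>x y. g (x + y) = g x + g y" and scal: "\<And>c x. g (c *\<^sub>C x) = c * g x"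
    and bnd: "\<And>x. cmod (g x) \<le> C * hnorm x"
  obtains v where "\<And>x. g x = cinner v x"
proof (cases "\<forall>x. g x = 0")
  case True
  then show thesis
    using that[of 0] by simp
next
  case False
  then obtain x0 where "g x0 \<noteq> 0"
    by blast
  then have "g ((1 / g x0) *\<^sub>C x0) = 1"
    by (simp add: scal)
  then obtain L where gL: "g L = 1" and min: "\<And>u. g u = 1 \<Longrightarrow> hnorm_sq L \<le> hnorm_sq u"
    using min_norm_solution[OF add scal bnd] by blast
  have orth: "cinner L k = 0" if "g k = 0" for k
    by (rule cinner_eq_0_if_hnorm_sq_minimal, rule min) (simp add: add scal gL \<open>g k = 0\<close>)
  define n where "n = cinner L L"
  have "n \<noteq> 0"
    using gL cinner_self_zero scal[of 0 0] unfolding n_def by force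
  have "cinner L x = g x * n" for x
  proof -
    have "g (x - g x *\<^sub>C L) = 0"
      using add[of "x - g x *\<^sub>C L" "g x *\<^sub>C L"] by (simp add: scal gL)
    then have "cinner L (x - g x *\<^sub>C L) = 0"
      by (rule orth)
    then show ?thesis
      by (simp add: cinner_diff_right cinner_scaleC_right n_def)
  qed
  moreover have "cnj (1 / n) = 1 / n"
    unfolding n_def by (metis cinner_self_eq_Re complex_cnj_complex_of_real complex_cnj_divide complex_cnj_one)
  ultimately show thesis
    using \<open>n \<noteq> 0\<close> by (intro that[of "(1 / n) *\<^sub>C L"]) (simp add: cinner_scaleC_left)
qed

lemma adjoint_norm_bound:
  fixes T S :: "'a::chilbert \<Rightarrow> 'a"
  assumes adjoint: "\<And>x y. cinner (T x) y = cinner x (S y)"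
    and "0 \<le> K" and bound: "\<And>x. hnorm (T x) \<le> K * hnorm x"
  shows "hnorm (S y) \<le> K * hnorm y"
proof -
  have "(hnorm (S y))\<^sup>2 = Re (cinner (T (S y)) y)"
    by (simp add: power2_hnorm hnorm_sq_def adjoint)
  also have "\<dots> \<le> hnorm (T (S y)) * hnorm y"
    using complex_Re_le_cmod cinner_norm_bound order_trans by blast
  also have "\<dots> \<le> (K * hnorm (S y)) * hnorm y"
    using mult_right_mono[OF bound hnorm_nonneg] .
  finally have "hnorm (S y) * hnorm (S y) \<le> (K * hnorm y) * hnorm (S y)"
    by (simp add: power2_eq_square algebra_simps)
  then show ?thesis
    using hnorm_nonneg[of "S y"] \<open>0 \<le> K\<close> hnorm_nonneg[of y]
    by (cases "hnorm (S y) = 0") simp_all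
qed

lemma adjoint_exists:
  assumes T: "T \<in> BH"
  shows "\<exists>S\<in>BH. \<forall>x y. cinner (T x) y = cinner x (S y)"
proof -
  obtain K where K: "K \<ge> 0" "\<And>x. hnorm (T x) \<le> K * hnorm x"
    using BH_bound[OF T] by blast
  have "\<exists>v. \<forall>x. cinner y (T x) = cinner v x" for y
  proof -
    have bound: "cmod (cinner y (T x)) \<le> (hnorm y * K) * hnorm x" for x
      using cinner_norm_bound[of y "T x"] mult_left_mono[OF K(2)[of x] hnorm_nonneg[of y]]
      by (simp add: mult.assoc)
    obtain v where "\<And>x. cinner y (T x) = cinner v x"
      by (rule riesz_representation[where g = "\<lambda>x. cinner y (T x)" and C = "hnorm y * K"])
        (simp_all add: BH_add[OF T] BH_scaleC[OF T] cinner_add_right cinner_scaleC_right bound)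
    then show ?thesis
      by blast
  qed
  then obtain S where S: "\<And>y x. cinner y (T x) = cinner (S y) x"
    by metis
  have adjoint: "cinner (T x) y = cinner x (S y)" for x y
    by (metis S cinner_conj_sym)
  have "hnorm (S y) \<le> K * hnorm y" for y
    by (rule adjoint_norm_bound[OF adjoint K])
  moreover have "S (y + z) = S y + S z" "S (c *\<^sub>C y) = c *\<^sub>C S y" for y z c
    by (rule cinner_eqI_left; simp add: S[symmetric] cinner_add_left cinner_scaleC_left)+
  ultimately have "S \<in> BH"
    unfolding BH_def by blast
  then show ?thesis
    using adjoint by blast
qed

lemma adj_BH: "T \<in> BH \<Longrightarrow> adj T \<in> BH"
  and cinner_adj_right: "T \<in> BH \<Longrightarrow> cinner (T x) y = cinner x (adj T y)"
  using someI_ex[OF adjoint_exists[unfolded Bex_def]] unfolding adj_def by blast+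

lemma cinner_adj_left: "T \<in> BH \<Longrightarrow> cinner x (T y) = cinner (adj T x) y"
  by (metis cinner_adj_right cinner_conj_sym)

lemma Ad_apply: "Ad a T h = a (T (adj a h))"
  by (simp add: Ad_def)

lemma Ad_BH: "a \<in> BH \<Longrightarrow> T \<in> BH \<Longrightarrow> Ad a T \<in> BH"
  unfolding Ad_def by (intro BH_comp adj_BH)

section \<open>Complete positivity and operational convexity\<close>

lemma linear_map_BH_add: "linear_map_BH \<Psi> \<Longrightarrow> \<Psi> (x + y) h = \<Psi> x h + \<Psi> y h"
  by (simp add: linear_map_BH_def)

lemma linear_map_BH_scaleC: "linear_map_BH \<Psi> \<Longrightarrow> \<Psi> (c *\<^sub>C x) h = c *\<^sub>C \<Psi> x h"
  by (simp add: linear_map_BH_def)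

lemma linear_map_BH_in_BH: "linear_map_BH \<Psi> \<Longrightarrow> \<Psi> x \<in> BH"
  by (simp add: linear_map_BH_def)

lemma linear_map_BH_zero: "linear_map_BH \<Psi> \<Longrightarrow> \<Psi> 0 h = 0"
  using linear_map_BH_scaleC[of \<Psi> 0 0 h] by simp

lemma linear_map_BH_sum:
  assumes "linear_map_BH \<Psi>"
  shows "\<Psi> (\<Sum>i\<in>I. f i) h = (\<Sum>i\<in>I. \<Psi> (f i) h)"
  by (induction I rule: infinite_finite_induct)
    (simp_all add: linear_map_BH_zero[OF assms] linear_map_BH_add[OF assms])

lemma pos_matB_Ad:
  fixes T :: "nat \<Rightarrow> nat \<Rightarrow> 'h::chilbert \<Rightarrow> 'h"
  assumes "a \<in> BH" and "pos_matB k T"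
  shows "pos_matB k (\<lambda>p q. Ad a (T p q))"
  unfolding pos_matB_def
proof
  fix \<xi> :: "nat \<Rightarrow> 'h"
  have "(\<Sum>i<k. \<Sum>j<k. cinner (\<xi> i) (Ad a (T i j) (\<xi> j)))
      = (\<Sum>i<k. \<Sum>j<k. cinner (adj a (\<xi> i)) (T i j (adj a (\<xi> j))))"
    by (simp add: Ad_apply cinner_adj_left[OF assms(1)])
  then show "Im (\<Sum>i<k. \<Sum>j<k. cinner (\<xi> i) (Ad a (T i j) (\<xi> j))) = 0 \<and>
      0 \<le> Re (\<Sum>i<k. \<Sum>j<k. cinner (\<xi> i) (Ad a (T i j) (\<xi> j)))"
    using assms(2)[unfolded pos_matB_def, rule_format, of "\<lambda>i. adj a (\<xi> i)"] by simp
qed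

lemma pos_matB_sum:
  fixes T :: "'i \<Rightarrow> nat \<Rightarrow> nat \<Rightarrow> 'h::chilbert \<Rightarrow> 'h"
  assumes "\<And>i. i \<in> I \<Longrightarrow> pos_matB k (T i)"
  shows "pos_matB k (\<lambda>p q h. \<Sum>i\<in>I. T i p q h)"
  unfolding pos_matB_def
proof
  fix \<xi> :: "nat \<Rightarrow> 'h"
  have "(\<Sum>p<k. \<Sum>q<k. cinner (\<xi> p) (\<Sum>i\<in>I. T i p q (\<xi> q)))
      = (\<Sum>i\<in>I. \<Sum>p<k. \<Sum>q<k. cinner (\<xi> p) (T i p q (\<xi> q)))"
  proof -
    have "(\<Sum>p<k. \<Sum>q<k. cinner (\<xi> p) (\<Sum>i\<in>I. T i p q (\<xi> q)))
        = (\<Sum>p<k. \<Sum>q<k. \<Sum>i\<in>I. cinner (\<xi> p) (T i p q (\<xi> q)))"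
      by (simp only: cinner_sum_right)
    also have "\<dots> = (\<Sum>p<k. \<Sum>i\<in>I. \<Sum>q<k. cinner (\<xi> p) (T i p q (\<xi> q)))"
      by (rule sum.cong[OF refl], rule sum.swap)
    also have "\<dots> = (\<Sum>i\<in>I. \<Sum>p<k. \<Sum>q<k. cinner (\<xi> p) (T i p q (\<xi> q)))"
      by (rule sum.swap)
    finally show ?thesis .
  qed
  moreover have "Im (\<Sum>p<k. \<Sum>q<k. cinner (\<xi> p) (T i p q (\<xi> q))) = 0 \<and>
      0 \<le> Re (\<Sum>p<k. \<Sum>q<k. cinner (\<xi> p) (T i p q (\<xi> q)))" if "i \<in> I" for i
    using assms[OF that] unfolding pos_matB_def by blast
  ultimately show "Im (\<Sum>p<k. \<Sum>q<k. cinner (\<xi> p) (\<Sum>i\<in>I. T i p q (\<xi> q))) = 0 \<and>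
      0 \<le> Re (\<Sum>p<k. \<Sum>q<k. cinner (\<xi> p) (\<Sum>i\<in>I. T i p q (\<xi> q)))"
    by (simp add: Im_sum Re_sum sum_nonneg)
qed

lemma completely_positive_Ad:
  assumes "completely_positive \<Psi>" and "a \<in> BH"
  shows "completely_positive (\<lambda>x. Ad a (\<Psi> x))"
proof -
  have lin: "linear_map_BH \<Psi>"
    using assms(1) by (simp add: completely_positive_def)
  then have "linear_map_BH (\<lambda>x. Ad a (\<Psi> x))"
    unfolding linear_map_BH_def
    by (auto simp: Ad_BH assms(2) Ad_apply BH_add BH_scaleC linear_map_BH_add linear_map_BH_scaleC
        linear_map_BH_in_BH)
  then show ?thesis
    using assms by (simp add: completely_positive_def pos_matB_Ad)
qed

lemma completely_positive_sum:
  assumes "\<And>i. i \<in> I \<Longrightarrow> completely_positive (\<Psi> i)"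
  shows "completely_positive (\<lambda>x h. \<Sum>i\<in>I. \<Psi> i x h)"
proof -
  have lin: "linear_map_BH (\<Psi> i)" if "i \<in> I" for i
    using assms[OF that] by (simp add: completely_positive_def)
  have "linear_map_BH (\<lambda>x h. \<Sum>i\<in>I. \<Psi> i x h)"
    unfolding linear_map_BH_def
    by (auto simp: BH_sum_fun linear_map_BH_in_BH linear_map_BH_add linear_map_BH_scaleC lin
        scaleC_sum_right sum.distrib intro!: sum.cong)
  then show ?thesis
    using assms by (auto simp: completely_positive_def intro!: pos_matB_sum)
qed

lemma op_convex_CP_maps: "op_convex CP_maps"
  unfolding op_convex_def CP_maps_def op_comb_def FOP_def
  by (auto intro!: completely_positive_sum completely_positive_Ad)

lemma op_convex_hull_eq: "op_convex S \<Longrightarrow> op_convex_hull S = S"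
  unfolding op_convex_hull_def by blast

lemma cstar_zero: "cstar (0::'a::cstar_algebra) = 0"
  using cstar_add[of "0::'a" 0] by simp

lemma cstar_one: "cstar (1::'a::cstar_algebra) = 1"
  using cstar_mult[of "cstar (1::'a)" 1] by (simp add: cstar_cstar)

lemma cinner_star_hom:
  assumes "unital_star_hom \<Phi>"
  shows "cinner \<xi> (\<Phi> (cstar y * y') \<eta>) = cinner (\<Phi> y \<xi>) (\<Phi> y' \<eta>)"
  using assms cinner_adj_right[of "\<Phi> y" \<xi> "\<Phi> y' \<eta>"]
  by (simp add: unital_star_hom_def linear_map_BH_in_BH)

lemma completely_positive_star_hom:
  assumes hom: "unital_star_hom \<Phi>"
  shows "completely_positive \<Phi>"
proof -
  have lin: "linear_map_BH \<Phi>"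
    using hom by (simp add: unital_star_hom_def)
  have "pos_matB k (\<lambda>i j. \<Phi> (X i j))" if "pos_matA k X" for k X
    unfolding pos_matB_def
  proof
    fix \<xi> :: "nat \<Rightarrow> 'b"
    obtain Y where Y: "\<And>i j. i < k \<Longrightarrow> j < k \<Longrightarrow> X i j = (\<Sum>l<k. cstar (Y l i) * Y l j)"
      using \<open>pos_matA k X\<close> unfolding pos_matA_def by blast
    define w where "w l i = \<Phi> (Y l i) (\<xi> i)" for l i
    have "(\<Sum>i<k. \<Sum>j<k. cinner (\<xi> i) (\<Phi> (X i j) (\<xi> j)))
        = (\<Sum>i<k. \<Sum>j<k. \<Sum>l<k. cinner (w l i) (w l j))"
      by (intro sum.cong refl)
        (simp add: Y linear_map_BH_sum[OF lin] cinner_sum_right cinner_star_hom[OF hom] w_def)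
    also have "\<dots> = (\<Sum>i<k. \<Sum>l<k. \<Sum>j<k. cinner (w l i) (w l j))"
      by (rule sum.cong[OF refl], rule sum.swap)
    also have "\<dots> = (\<Sum>l<k. \<Sum>i<k. \<Sum>j<k. cinner (w l i) (w l j))"
      by (rule sum.swap)
    also have "\<dots> = (\<Sum>l<k. cinner (\<Sum>i<k. w l i) (\<Sum>j<k. w l j))"
      unfolding cinner_sum_left by (simp only: cinner_sum_right)
    finally show "Im (\<Sum>i<k. \<Sum>j<k. cinner (\<xi> i) (\<Phi> (X i j) (\<xi> j))) = 0 \<and>
        0 \<le> Re (\<Sum>i<k. \<Sum>j<k. cinner (\<xi> i) (\<Phi> (X i j) (\<xi> j)))"
      by (simp add: Im_sum Re_sum cinner_self_real cinner_self_nonneg sum_nonneg)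
  qed
  then show ?thesis
    using lin by (simp add: completely_positive_def)
qed

section \<open>Summands of a *-homomorphism\<close>

text \<open>\<open>gram_form \<Theta> x \<xi> \<zeta>\<close> is \<open>\<langle>(\<xi>, \<zeta>), \<Theta>\<^sub>2(M) (\<xi>, \<zeta>)\<rangle>\<close> for the positive matrix
  \<open>M = [x 1]\<^sup>* [x 1] = [[x\<^sup>*x, x\<^sup>*], [x, 1]]\<close> in \<open>M\<^sub>2(A)\<close>.\<close>

definition gram_form :: "('a::cstar_algebra \<Rightarrow> 'h \<Rightarrow> 'h::chilbert) \<Rightarrow> 'a \<Rightarrow> 'h \<Rightarrow> 'h \<Rightarrow> complex" where
  "gram_form \<Theta> x \<xi> \<zeta> = cinner \<xi> (\<Theta> (cstar x * x) \<xi>) + cinner \<xi> (\<Theta> (cstar x) \<zeta>)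
     + cinner \<zeta> (\<Theta> x \<xi>) + cinner \<zeta> (\<Theta> 1 \<zeta>)"

lemma pos_matA_outer_product:
  fixes c :: "nat \<Rightarrow> 'a::cstar_algebra"
  assumes "0 < k"
  shows "pos_matA k (\<lambda>p q. cstar (c p) * c q)"
proof -
  have "cstar (c p) * c q = (\<Sum>l<k. cstar (if l = 0 then c p else 0) * (if l = 0 then c q else 0))"
    for p q
  proof -
    have "(\<Sum>l<k. cstar (if l = 0 then c p else 0) * (if l = 0 then c q else 0))
        = (\<Sum>l<k. if l = 0 then cstar (c p) * c q else 0)"
      by (intro sum.cong) (simp_all add: cstar_zero)
    then show ?thesis
      using assms by simp
  qed
  then show ?thesis
    unfolding pos_matA_def by (intro exI[of _ "\<lambda>l p. if l = 0 then c p else 0"]) blast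
qed

lemma gram_form_nonneg:
  assumes "completely_positive \<Theta>"
  shows "Im (gram_form \<Theta> x \<xi> \<zeta>) = 0 \<and> 0 \<le> Re (gram_form \<Theta> x \<xi> \<zeta>)"
proof -
  define c where "c p = (if p = 0 then x else 1)" for p :: nat
  define v where "v p = (if p = 0 then \<xi> else \<zeta>)" for p :: nat
  have "pos_matB 2 (\<lambda>p q. \<Theta> (cstar (c p) * c q))"
    using assms pos_matA_outer_product[of 2 c] by (simp add: completely_positive_def)
  then have "Im (\<Sum>p<2. \<Sum>q<2. cinner (v p) (\<Theta> (cstar (c p) * c q) (v q))) = 0 \<and>
      0 \<le> Re (\<Sum>p<2. \<Sum>q<2. cinner (v p) (\<Theta> (cstar (c p) * c q) (v q)))"
    unfolding pos_matB_def by blast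
  moreover have "(\<Sum>p<2. \<Sum>q<2. cinner (v p) (\<Theta> (cstar (c p) * c q) (v q))) = gram_form \<Theta> x \<xi> \<zeta>"
    by (simp add: numeral_2_eq_2 c_def v_def gram_form_def cstar_one)
  ultimately show ?thesis
    by simp
qed

lemma gram_form_sum:
  "gram_form (\<lambda>y h. \<Sum>i\<in>I. \<Theta> i y h) x \<xi> \<zeta> = (\<Sum>i\<in>I. gram_form (\<Theta> i) x \<xi> \<zeta>)"
  by (simp add: gram_form_def cinner_sum_right sum.distrib)

lemma gram_form_star_hom:
  assumes "unital_star_hom \<Phi>"
  shows "gram_form \<Phi> x \<xi> (- \<Phi> x \<xi>) = 0"
proof -
  have "\<Phi> 1 = id"
    using assms by (simp add: unital_star_hom_def)
  then show ?thesis
    using cinner_star_hom[OF assms, of _ x 1] cinner_star_hom[OF assms, of _ x x]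
      cinner_star_hom[OF assms, of _ 1 x]
    by (simp add: gram_form_def cstar_one cinner_minus_left cinner_minus_right)
qed

lemma gram_form_add_scaleC:
  assumes "\<And>y. \<Theta> y \<in> BH"
  shows "gram_form \<Theta> x \<xi> (\<zeta> + t *\<^sub>C \<eta>) = gram_form \<Theta> x \<xi> \<zeta>
    + t * (cinner \<xi> (\<Theta> (cstar x) \<eta>) + cinner \<zeta> (\<Theta> 1 \<eta>))
    + cnj t * cinner \<eta> (\<Theta> x \<xi> + \<Theta> 1 \<zeta>) + cnj t * t * cinner \<eta> (\<Theta> 1 \<eta>)"
  by (simp add: gram_form_def BH_add[OF assms] BH_scaleC[OF assms] cinner_add_left cinner_add_right
      cinner_scaleC_left cinner_scaleC_right algebra_simps)

lemma gram_form_zero_imp_kernel: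
  assumes BH: "\<And>y. \<Theta> y \<in> BH"
    and nonneg: "\<And>\<zeta>. Im (gram_form \<Theta> x \<xi> \<zeta>) = 0 \<and> 0 \<le> Re (gram_form \<Theta> x \<xi> \<zeta>)"
    and zero: "gram_form \<Theta> x \<xi> \<zeta> = 0"
  shows "\<Theta> x \<xi> + \<Theta> 1 \<zeta> = 0"
    and "cinner \<xi> (\<Theta> (cstar x) \<eta>) + cinner \<zeta> (\<Theta> 1 \<eta>) = 0"
proof -
  have "cinner \<xi> (\<Theta> (cstar x) \<eta>) + cinner \<zeta> (\<Theta> 1 \<eta>) = 0 \<and> cinner \<eta> (\<Theta> x \<xi> + \<Theta> 1 \<zeta>) = 0"
    for \<eta>
  proof -
    let ?\<alpha> = "cinner \<xi> (\<Theta> (cstar x) \<eta>) + cinner \<zeta> (\<Theta> 1 \<eta>)"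
    let ?\<beta> = "cinner \<eta> (\<Theta> x \<xi> + \<Theta> 1 \<zeta>)"
    let ?\<gamma> = "cinner \<eta> (\<Theta> 1 \<eta>)"
    have "Im (t * ?\<alpha> + cnj t * ?\<beta> + cnj t * t * ?\<gamma>) = 0
        \<and> 0 \<le> Re (t * ?\<alpha> + cnj t * ?\<beta> + cnj t * t * ?\<gamma>)" for t
      using nonneg[of "\<zeta> + t *\<^sub>C \<eta>"] unfolding gram_form_add_scaleC[OF BH] zero by simp
    then show ?thesis
      using complex_quadratic_nonneg_imp_linear_zero by blast
  qed
  then show "\<Theta> x \<xi> + \<Theta> 1 \<zeta> = 0"
    and "cinner \<xi> (\<Theta> (cstar x) \<eta>) + cinner \<zeta> (\<Theta> 1 \<eta>) = 0"
    by (auto intro: cinner_eqI_right)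
qed

lemma star_hom_summand_gram_form_zero:
  assumes hom: "unital_star_hom \<Phi>" and "finite I" and "i \<in> I"
    and cp: "\<And>j. j \<in> I \<Longrightarrow> completely_positive (\<Theta> j)"
    and sum: "\<And>x. \<Phi> x = (\<lambda>h. \<Sum>j\<in>I. \<Theta> j x h)"
  shows "gram_form (\<Theta> i) x \<xi> (- \<Phi> x \<xi>) = 0"
proof -
  define \<zeta> where "\<zeta> = - \<Phi> x \<xi>"
  have nonneg: "Im (gram_form (\<Theta> j) x \<xi> \<zeta>) = 0 \<and> 0 \<le> Re (gram_form (\<Theta> j) x \<xi> \<zeta>)"
    if "j \<in> I" for j
    by (rule gram_form_nonneg[OF cp[OF that]])
  have "\<Phi> = (\<lambda>y h. \<Sum>j\<in>I. \<Theta> j y h)"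
    by (rule ext) (rule sum)
  moreover have "gram_form \<Phi> x \<xi> \<zeta> = 0"
    unfolding \<zeta>_def by (rule gram_form_star_hom[OF hom])
  ultimately have "(\<Sum>j\<in>I. gram_form (\<Theta> j) x \<xi> \<zeta>) = 0"
    by (simp only: gram_form_sum)
  then have "(\<Sum>j\<in>I. Re (gram_form (\<Theta> j) x \<xi> \<zeta>)) = 0"
    by (simp flip: Re_sum)
  then have "Re (gram_form (\<Theta> i) x \<xi> \<zeta>) = 0"
    using sum_nonneg_eq_0_iff[OF \<open>finite I\<close>, of "\<lambda>j. Re (gram_form (\<Theta> j) x \<xi> \<zeta>)"]
      nonneg \<open>i \<in> I\<close> by simp
  then show ?thesis
    using nonneg[OF \<open>i \<in> I\<close>] by (simp add: complex_eq_iff \<zeta>_def)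
qed

lemma star_hom_summand_factors:
  assumes hom: "unital_star_hom \<Phi>" and "finite I" and "i \<in> I"
    and cp: "\<And>j. j \<in> I \<Longrightarrow> completely_positive (\<Theta> j)"
    and sum: "\<And>x. \<Phi> x = (\<lambda>h. \<Sum>j\<in>I. \<Theta> j x h)"
  shows "\<Theta> i 1 \<in> commutant_range \<Phi>" and "\<Theta> i x = \<Theta> i 1 \<circ> \<Phi> x"
proof -
  have BH: "\<Theta> i y \<in> BH" for y
    using cp[OF \<open>i \<in> I\<close>] by (simp add: completely_positive_def linear_map_BH_in_BH)
  note kernel = gram_form_zero_imp_kernel[OF BH gram_form_nonneg[OF cp[OF \<open>i \<in> I\<close>]]
      star_hom_summand_gram_form_zero[OF assms]]
  have left: "\<Theta> i x = \<Theta> i 1 \<circ> \<Phi> x" for x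
  proof
    fix \<xi>
    have "\<Theta> i x \<xi> = - \<Theta> i 1 (- \<Phi> x \<xi>)"
      using kernel(1)[where x = x and \<xi> = \<xi>] by (simp add: eq_neg_iff_add_eq_0)
    then show "\<Theta> i x \<xi> = (\<Theta> i 1 \<circ> \<Phi> x) \<xi>"
      by (simp add: BH_minus[OF BH])
  qed
  have "\<Theta> i (cstar x) = \<Phi> (cstar x) \<circ> \<Theta> i 1" for x
  proof
    fix \<eta>
    have "cinner \<xi> (\<Theta> i (cstar x) \<eta>) = cinner \<xi> (\<Phi> (cstar x) (\<Theta> i 1 \<eta>))" for \<xi>
    proof -
      have "cinner \<xi> (\<Theta> i (cstar x) \<eta>) = cinner (\<Phi> x \<xi>) (\<Theta> i 1 \<eta>)"
        using kernel(2)[where x = x and \<xi> = \<xi> and \<eta> = \<eta>] by (simp add: cinner_minus_left)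
      also have "\<dots> = cinner \<xi> (\<Phi> (cstar x) (\<Theta> i 1 \<eta>))"
        using hom cinner_adj_right[of "\<Phi> x"] by (simp add: unital_star_hom_def linear_map_BH_in_BH)
      finally show ?thesis .
    qed
    then show "\<Theta> i (cstar x) \<eta> = (\<Phi> (cstar x) \<circ> \<Theta> i 1) \<eta>"
      by (simp add: cinner_eqI_right)
  qed
  then have "\<Theta> i x = \<Phi> x \<circ> \<Theta> i 1" for x
    using cstar_cstar[of x] by metis
  then have "\<Theta> i 1 \<circ> \<Phi> x = \<Phi> x \<circ> \<Theta> i 1" for x
    using trans[OF sym[OF left]] by blast
  then show "\<Theta> i 1 \<in> commutant_range \<Phi>"
    using BH unfolding commutant_range_def by blast
  show "\<Theta> i x = \<Theta> i 1 \<circ> \<Phi> x"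
    by (rule left)
qed

theorem mainTheorem2:
  fixes \<Phi> :: "'a::cstar_algebra \<Rightarrow> ('h::chilbert \<Rightarrow> 'h)"
  assumes "unital_star_hom \<Phi>"
  shows "op_extreme (op_convex_hull (CP_maps :: ('a \<Rightarrow> ('h \<Rightarrow> 'h)) set)) \<Phi>"
  unfolding op_extreme_def op_convex_hull_eq[OF op_convex_CP_maps]
proof (intro conjI allI impI)
  show "\<Phi> \<in> CP_maps"
    using completely_positive_star_hom[OF assms] by (simp add: CP_maps_def)
next
  fix m a \<Psi>
  assume "a \<in> FOP m \<and> (\<forall>i<m. \<Psi> i \<in> CP_maps) \<and> \<Phi> = op_comb m a \<Psi>"
  then have a: "a \<in> FOP m" and \<Psi>: "\<forall>i<m. \<Psi> i \<in> CP_maps" and \<Phi>: "\<Phi> = op_comb m a \<Psi>"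
    by blast+
  define \<Theta> where "\<Theta> i x = Ad (a i) (\<Psi> i x)" for i x
  have cp: "completely_positive (\<Theta> i)" if "i \<in> {..<m}" for i
    using a \<Psi> that unfolding \<Theta>_def
    by (intro completely_positive_Ad) (simp_all add: FOP_def CP_maps_def)
  have sum: "\<Phi> x = (\<lambda>h. \<Sum>j\<in>{..<m}. \<Theta> j x h)" for x
    unfolding \<Phi> op_comb_def \<Theta>_def ..
  note summand = star_hom_summand_factors[OF assms finite_lessThan _ cp sum]
  show "\<exists>z. \<forall>i<m. z i \<in> commutant_range \<Phi> \<and> (\<lambda>x. Ad (a i) (\<Psi> i x)) = (\<lambda>x. z i \<circ> \<Phi> x)"
  proof (intro exI allI impI)
    fix i
    assume "i < m"
    then have "\<Theta> i 1 \<in> commutant_range \<Phi> \<and> (\<lambda>x. \<Theta> i x) = (\<lambda>x. \<Theta> i 1 \<circ> \<Phi> x)"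
      using summand by blast
    then show "(\<lambda>i. \<Theta> i 1) i \<in> commutant_range \<Phi> \<and> (\<lambda>x. Ad (a i) (\<Psi> i x)) = (\<lambda>x. (\<lambda>i. \<Theta> i 1) i \<circ> \<Phi> x)"
      by (simp only: \<Theta>_def)
  qed
qed

end
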